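(* Let $\mathcal{R}_i=(X_i,\Phi_i,\check X_i,\check\Phi_i)$, $i\in\{1,2\}$, be root data and $f:\mathcal{R}_2\to\mathcal{R}_1$ a homomorphism of root data with $f:X_2\to X_1$ surjective. Put $A=X_1/f(\Phi_2^\top)$, let $h_1:X_1\to A$ be the natural projection and $h_2:X_2/\Phi_2^\top\to A$, $h_2(x+\Phi_2^\top)=f(x)+f(\Phi_2^\top)$. Then $\phi:X_2\to X_1\oplus(X_2/\Phi_2^\top)$, $\phi(x)=(f(x),x+\Phi_2^\top)$, defines an isomorphism of root data $\phi:\mathcal{R}_2\to\mathcal{R}_1\oplus_{(A,h_1,h_2)}(\mathcal{R}_2)_{\mathrm{rad}}$, and $f=p_1\circ\phi$, where $p_1$ is the projection of the central product onto its first factor.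
   Context: Root data $\mathcal{R}=(X,\Phi,\check X,\check\Phi)$ (reduced), with perfect pairing $\langle-,-\rangle$. A homomorphism of root data $\mathcal{R}'\to\mathcal{R}$ is a $\mathbb{Z}$-linear $f:X'\to X$ with a bijection $\tau:\Phi\to\Phi'$ with $f(\tau(\alpha))=\alpha$ and $\check f(\check\alpha)=\tau(\alpha)^\vee$ ($\check f$ the transpose). For $S\subseteq X$: $S^\top=\{x\in X: nx\in\mathbb{Z}S\text{ for some integer }n>0\}$, $S^\perp=\{y\in\check X:\langle x,y\rangle=0\ \forall x\in S\}$; similarly for subsets of $\check X$. The radical of $\mathcal{R}$ is the torus (root datum with no roots) $\mathcal{R}_{\mathrm{rad}}=(X/\Phi^\top,\emptyset,\check\Phi^\perp,\emptyset)$ with induced pairing. For a submodule $B\subseteq X$ containing $\Phi$, the induced root datum is $\mathcal{R}_B=(B,\Phi,\mathrm{Hom}(B,\mathbb{Z}),\check\iota_B(\check\Phi))$, $\check\iota_B(y)=\langle-,y\rangle|_B$. Central product: for root data $\mathcal{R},\mathcal{R}'$ with lattices $X,X'$, a $\mathbb{Z}$-module $A$ and surjections $h:X\to A$, $h':X'\to A$ killing the roots, $\mathcal{R}\oplus_{(A,h,h')}\mathcal{R}'$ is the root datum induced from the direct sum $\mathcal{R}\oplus\mathcal{R}'$ by the submodule $X\oplus_A X'=\{(x,x'): h(x)=h'(x')\}$. *)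

theory Defs
  imports "HOL-Algebra.Algebra"
begin

text \<open>Lattices (free Z-modules of finite rank) are modelled as commutative groups in
  HOL-Algebra (written multiplicatively), with a finite Z-basis.\<close>

record ('x, 'y) root_datum =
  lat :: "'x monoid"
  roots :: "'x set"
  colat :: "'y monoid"
  coroot :: "'x \<Rightarrow> 'y"
  pairing :: "'x \<Rightarrow> 'y \<Rightarrow> int"

definition free_lattice :: "'x monoid \<Rightarrow> bool" where
  "free_lattice G \<longleftrightarrow> comm_group G \<and>
     (\<exists>(b::nat \<Rightarrow> 'x) n. b ` {..<n} \<subseteq> carrier G \<and>
        bij_betw (\<lambda>c. finprod G (\<lambda>i. b i [^]\<^bsub>G\<^esub> (c i :: int)) {..<n})
                 {c::nat \<Rightarrow> int. \<forall>i\<ge>n. c i = 0} (carrier G))"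

definition perfect_pairing :: "'x monoid \<Rightarrow> 'y monoid \<Rightarrow> ('x \<Rightarrow> 'y \<Rightarrow> int) \<Rightarrow> bool" where
  "perfect_pairing LX LY p \<longleftrightarrow>
     (\<forall>x\<in>carrier LX. \<forall>x'\<in>carrier LX. \<forall>y\<in>carrier LY. p (x \<otimes>\<^bsub>LX\<^esub> x') y = p x y + p x' y) \<and>
     (\<forall>x\<in>carrier LX. \<forall>y\<in>carrier LY. \<forall>y'\<in>carrier LY. p x (y \<otimes>\<^bsub>LY\<^esub> y') = p x y + p x y') \<and>
     (\<forall>\<phi>\<in>hom LY integer_group. \<exists>!x. x \<in> carrier LX \<and> (\<forall>y\<in>carrier LY. p x y = \<phi> y)) \<and>
     (\<forall>\<psi>\<in>hom LX integer_group. \<exists>!y. y \<in> carrier LY \<and> (\<forall>x\<in>carrier LX. p x y = \<psi> x))"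

definition coroots :: "('x, 'y) root_datum \<Rightarrow> 'y set" where
  "coroots R = coroot R ` roots R"

definition is_root_datum :: "('x, 'y) root_datum \<Rightarrow> bool" where
  "is_root_datum R \<longleftrightarrow>
     free_lattice (lat R) \<and> free_lattice (colat R) \<and>
     perfect_pairing (lat R) (colat R) (pairing R) \<and>
     finite (roots R) \<and> roots R \<subseteq> carrier (lat R) \<and> coroots R \<subseteq> carrier (colat R) \<and>
     inj_on (coroot R) (roots R) \<and>
     (\<forall>\<alpha>\<in>roots R. pairing R \<alpha> (coroot R \<alpha>) = 2) \<and>
     (\<forall>\<alpha>\<in>roots R. \<forall>\<beta>\<in>roots R.
        \<beta> \<otimes>\<^bsub>lat R\<^esub> (\<alpha> [^]\<^bsub>lat R\<^esub> (- pairing R \<beta> (coroot R \<alpha>))) \<in> roots R) \<and>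
     (\<forall>\<alpha>\<in>roots R. \<forall>\<beta>\<in>roots R.
        coroot R \<beta> \<otimes>\<^bsub>colat R\<^esub> (coroot R \<alpha> [^]\<^bsub>colat R\<^esub> (- pairing R \<alpha> (coroot R \<beta>)))
          \<in> coroots R)"

definition is_reduced_root_datum :: "('x, 'y) root_datum \<Rightarrow> bool" where
  "is_reduced_root_datum R \<longleftrightarrow> is_root_datum R \<and>
     (\<forall>\<alpha>\<in>roots R. \<forall>n::int. \<alpha> [^]\<^bsub>lat R\<^esub> n \<in> roots R \<longrightarrow> n = 1 \<or> n = -1)"

definition transpose ::
  "('x', 'y') root_datum \<Rightarrow> ('x, 'y) root_datum \<Rightarrow> ('x' \<Rightarrow> 'x) \<Rightarrow> 'y \<Rightarrow> 'y'" where
  "transpose R' R f y = (THE y'. y' \<in> carrier (colat R') \<and>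
       (\<forall>x\<in>carrier (lat R'). pairing R' x y' = pairing R (f x) y))"

definition root_hom ::
  "('x', 'y') root_datum \<Rightarrow> ('x, 'y) root_datum \<Rightarrow> ('x' \<Rightarrow> 'x) \<Rightarrow> ('x \<Rightarrow> 'x') \<Rightarrow> bool" where
  "root_hom R' R f \<tau> \<longleftrightarrow> f \<in> hom (lat R') (lat R) \<and> bij_betw \<tau> (roots R) (roots R') \<and>
     (\<forall>\<alpha>\<in>roots R. f (\<tau> \<alpha>) = \<alpha> \<and> transpose R' R f (coroot R \<alpha>) = coroot R' (\<tau> \<alpha>))"

definition root_iso ::
  "('x', 'y') root_datum \<Rightarrow> ('x, 'y) root_datum \<Rightarrow> ('x' \<Rightarrow> 'x) \<Rightarrow> ('x \<Rightarrow> 'x') \<Rightarrow> bool" where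
  "root_iso R' R f \<tau> \<longleftrightarrow> root_hom R' R f \<tau> \<and> bij_betw f (carrier (lat R')) (carrier (lat R))"

definition span_top :: "'x monoid \<Rightarrow> 'x set \<Rightarrow> 'x set" where
  "span_top G S = {x \<in> carrier G. \<exists>n::nat. n > 0 \<and> x [^]\<^bsub>G\<^esub> n \<in> generate G S}"

definition rad :: "('x, 'y) root_datum \<Rightarrow> ('x set, 'y) root_datum" where
  "rad R = \<lparr> lat = lat R Mod span_top (lat R) (roots R),
             roots = {},
             colat = (colat R)\<lparr>carrier := {y \<in> carrier (colat R). \<forall>\<alpha>\<in>roots R. pairing R \<alpha> y = 0}\<rparr>,
             coroot = (\<lambda>_. \<one>\<^bsub>colat R\<^esub>),
             pairing = (\<lambda>C y. pairing R (SOME x. x \<in> C) y) \<rparr>"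

definition dsum :: "('x, 'y) root_datum \<Rightarrow> ('x', 'y') root_datum \<Rightarrow> ('x \<times> 'x', 'y \<times> 'y') root_datum" where
  "dsum R R' = \<lparr> lat = lat R \<times>\<times> lat R',
      roots = (\<lambda>a. (a, \<one>\<^bsub>lat R'\<^esub>)) ` roots R \<union> (\<lambda>a. (\<one>\<^bsub>lat R\<^esub>, a)) ` roots R',
      colat = colat R \<times>\<times> colat R',
      coroot = (\<lambda>(a, b). if a \<in> roots R \<and> b = \<one>\<^bsub>lat R'\<^esub>
                          then (coroot R a, \<one>\<^bsub>colat R'\<^esub>) else (\<one>\<^bsub>colat R\<^esub>, coroot R' b)),
      pairing = (\<lambda>(x, x') (y, y'). pairing R x y + pairing R' x' y') \<rparr>"

definition dual_group :: "'x monoid \<Rightarrow> ('x \<Rightarrow> int) monoid" where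
  "dual_group G = \<lparr> carrier = {\<phi>. \<phi> \<in> hom G integer_group \<and> (\<forall>b. b \<notin> carrier G \<longrightarrow> \<phi> b = 0)},
                    monoid.mult = (\<lambda>\<phi> \<psi> b. \<phi> b + \<psi> b),
                    one = (\<lambda>_. 0) \<rparr>"

definition induced :: "('x, 'y) root_datum \<Rightarrow> 'x set \<Rightarrow> ('x, 'x \<Rightarrow> int) root_datum" where
  "induced R B = \<lparr> lat = (lat R)\<lparr>carrier := B\<rparr>,
                   roots = roots R,
                   colat = dual_group ((lat R)\<lparr>carrier := B\<rparr>),
                   coroot = (\<lambda>\<alpha> b. if b \<in> B then pairing R b (coroot R \<alpha>) else 0),
                   pairing = (\<lambda>b \<phi>. \<phi> b) \<rparr>"

definition central_prod ::
  "('x, 'y) root_datum \<Rightarrow> ('x', 'y') root_datum \<Rightarrow> 'z monoid \<Rightarrow> ('x \<Rightarrow> 'z) \<Rightarrow> ('x' \<Rightarrow> 'z)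
     \<Rightarrow> ('x \<times> 'x', ('x \<times> 'x') \<Rightarrow> int) root_datum" where
  "central_prod R R' A h h' =
     induced (dsum R R') {(x, x'). x \<in> carrier (lat R) \<and> x' \<in> carrier (lat R') \<and> h x = h' x'}"

end

theory Submission
  imports Defs
begin

text \<open>Write T for the saturation of the root lattice of R2. The map \<phi> x = (f x, x + T) is a
  homomorphism onto the fibre product of X1 and X2/T over A: given (a, c + T) with a - f c = f t
  for some t in T, it is \<phi> (t + c). Its kernel is ker f \<inter> T. An element t of it pairs trivially
  with every coroot of R2, since \<langle>t, \<tau>(\<alpha>)\<or>\<rangle> = \<langle>f t, \<alpha>\<or>\<rangle>, and an element of T orthogonal to all
  coroots vanishes: the reflection-invariant form B(u, v) = \<Sigma>\<gamma> \<langle>\<gamma>, u\<rangle>\<langle>\<gamma>, v\<rangle> satisfies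
  2 B(\<alpha>\<or>, -) = B(\<alpha>\<or>, \<alpha>\<or>) \<langle>\<alpha>, -\<rangle>, so a positive multiple of \<langle>t, -\<rangle> is B(w, -) for some w in the
  coroot lattice; then B(w, w) = 0 forces w to be orthogonal to all roots, hence \<langle>t, -\<rangle> = 0.
  The roots of the central product are the pairs (\<alpha>, 0), and their coroots pair with \<phi> x exactly
  as \<alpha>\<or> pairs with f x, which gives the root correspondence.\<close>

lemma hom_integer_group:
  assumes G: "group G" and h: "h \<in> hom G integer_group"
  shows hom_integer_group_one: "h \<one>\<^bsub>G\<^esub> = 0"
    and hom_integer_group_mult: "x \<in> carrier G \<Longrightarrow> y \<in> carrier G \<Longrightarrow> h (x \<otimes>\<^bsub>G\<^esub> y) = h x + h y"
    and hom_integer_group_inv: "x \<in> carrier G \<Longrightarrow> h (inv\<^bsub>G\<^esub> x) = - h x"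
    and hom_integer_group_int_pow: "x \<in> carrier G \<Longrightarrow> h (x [^]\<^bsub>G\<^esub> (k::int)) = k * h x"
    and hom_integer_group_nat_pow: "x \<in> carrier G \<Longrightarrow> h (x [^]\<^bsub>G\<^esub> (n::nat)) = int n * h x"
proof -
  interpret group_hom G integer_group h
    using G h by (simp add: group_hom_def group_hom_axioms_def)
  show "h \<one>\<^bsub>G\<^esub> = 0" by simp
  show "x \<in> carrier G \<Longrightarrow> y \<in> carrier G \<Longrightarrow> h (x \<otimes>\<^bsub>G\<^esub> y) = h x + h y" by simp
  show "x \<in> carrier G \<Longrightarrow> h (inv\<^bsub>G\<^esub> x) = - h x" by simp
  show "x \<in> carrier G \<Longrightarrow> h (x [^]\<^bsub>G\<^esub> (k::int)) = k * h x" by (simp add: hom_int_pow)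
  show "x \<in> carrier G \<Longrightarrow> h (x [^]\<^bsub>G\<^esub> (n::nat)) = int n * h x" by (simp add: hom_nat_pow)
qed

lemma hom_restrict_codomain: "h \<in> hom G H \<Longrightarrow> h ` carrier G \<subseteq> B \<Longrightarrow> h \<in> hom G (H\<lparr>carrier := B\<rparr>)"
  by (auto simp: hom_def)

lemma (in group) rcos_SOME:
  assumes "subgroup T G" and "x \<in> carrier G"
  shows rcos_SOME_mem: "(SOME y. y \<in> T #> x) \<in> T #> x"
    and rcos_SOME_closed: "(SOME y. y \<in> T #> x) \<in> carrier G"
proof -
  show "(SOME y. y \<in> T #> x) \<in> T #> x" using rcos_self[OF assms(2,1)] by (rule someI)
  then show "(SOME y. y \<in> T #> x) \<in> carrier G"
    using r_coset_subset_G[OF subgroup.subset[OF assms(1)] assms(2)] by blast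
qed

lemma (in group_hom) image_rcos_SOME:
  assumes T: "subgroup T G" and x: "x \<in> carrier G"
  shows "h ` T #>\<^bsub>H\<^esub> h (SOME y. y \<in> T #> x) = h ` T #>\<^bsub>H\<^esub> h x"
proof -
  interpret T: subgroup T G by (rule T)
  interpret hT: subgroup "h ` T" H by (rule subgroup_img_is_subgroup[OF T])
  define y where "y = (SOME y. y \<in> T #> x)"
  have y: "y \<in> carrier G" using G.rcos_SOME_closed[OF T x] by (simp add: y_def)
  have "y \<otimes> inv x \<in> T"
    using T.rcos_module_imp[OF G.is_group x] G.rcos_SOME_mem[OF T x] by (simp add: y_def)
  then have "h y \<otimes>\<^bsub>H\<^esub> inv\<^bsub>H\<^esub> h x \<in> h ` T"
    using x y by (metis hom_inv hom_mult image_eqI G.inv_closed)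
  then have "h y \<in> h ` T #>\<^bsub>H\<^esub> h x" using x y by (simp add: hT.rcos_module_rev)
  then show ?thesis using x y by (simp add: H.repr_independence[OF _ _ hT.subgroup_axioms] y_def)
qed

lemma (in group_hom) paired_rcos_bij:
  assumes T: "subgroup T G" and ker: "\<And>t. t \<in> T \<Longrightarrow> h t = \<one>\<^bsub>H\<^esub> \<Longrightarrow> t = \<one>"
  shows "bij_betw (\<lambda>x. (h x, T #> x)) (carrier G)
           {(a, C). a \<in> carrier H \<and> C \<in> carrier (G Mod T) \<and> h ` T #>\<^bsub>H\<^esub> a = h ` T #>\<^bsub>H\<^esub> h (SOME y. y \<in> C)}"
    (is "bij_betw ?\<phi> _ ?B")
proof (rule bij_betw_imageI)
  interpret T: subgroup T G by (rule T)
  interpret hT: subgroup "h ` T" H by (rule subgroup_img_is_subgroup[OF T])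
  show "inj_on ?\<phi> (carrier G)"
  proof (rule inj_onI)
    fix x y assume x: "x \<in> carrier G" and y: "y \<in> carrier G" and eq: "(h x, T #> x) = (h y, T #> y)"
    then have "x \<in> T #> y" using G.repr_independenceD[OF T x] by simp
    then have "x \<otimes> inv y \<in> T" using T.rcos_module_imp[OF G.is_group y] by blast
    moreover have "h (x \<otimes> inv y) = \<one>\<^bsub>H\<^esub>" using x y eq by simp
    ultimately have "x \<otimes> inv y = \<one>" by (rule ker)
    then show "x = y" using x y by (metis G.inv_closed G.inv_solve_right G.l_one G.one_closed)
  qed
  show "?\<phi> ` carrier G = ?B"
  proof (intro equalityI subsetI)
    fix b assume "b \<in> ?\<phi> ` carrier G"
    then obtain x where x: "x \<in> carrier G" and b: "b = (h x, T #> x)" by blast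
    then show "b \<in> ?B"
      using image_rcos_SOME[OF T x] G.rcosetsI[OF T.subset x] by (simp add: FactGroup_def)
  next
    fix b assume "b \<in> ?B"
    then obtain a C where b: "b = (a, C)" and a: "a \<in> carrier H" and C: "C \<in> rcosets T"
      and eqC: "h ` T #>\<^bsub>H\<^esub> a = h ` T #>\<^bsub>H\<^esub> h (SOME y. y \<in> C)"
      by (auto simp: FactGroup_def)
    from C obtain c where c: "c \<in> carrier G" and Cc: "C = T #> c" unfolding RCOSETS_def by blast
    have eq: "h ` T #>\<^bsub>H\<^esub> a = h ` T #>\<^bsub>H\<^esub> h c" using eqC image_rcos_SOME[OF T c] Cc by simp
    have "a \<in> h ` T #>\<^bsub>H\<^esub> h c" using H.repr_independenceD[OF hT.subgroup_axioms a eq[symmetric]] .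
    then have "a \<otimes>\<^bsub>H\<^esub> inv\<^bsub>H\<^esub> h c \<in> h ` T" using c by (intro hT.rcos_module_imp) simp_all
    then obtain t where ht: "a \<otimes>\<^bsub>H\<^esub> inv\<^bsub>H\<^esub> h c = h t" and t: "t \<in> T" by (rule imageE)
    have tc: "t \<otimes> c \<in> carrier G" using t c T.subset by blast
    have "h (t \<otimes> c) = (a \<otimes>\<^bsub>H\<^esub> inv\<^bsub>H\<^esub> h c) \<otimes>\<^bsub>H\<^esub> h c"
      using t c T.subset by (auto simp: ht)
    also have "\<dots> = a" using a c by (simp add: H.m_assoc)
    finally have "b = (h (t \<otimes> c), T #> (t \<otimes> c))"
      using b Cc G.repr_independence[OF G.rcosI[OF t T.subset c] c T] by (simp only:)
    then show "b \<in> ?\<phi> ` carrier G" using tc by (rule image_eqI)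
  qed
qed

lemma span_top_subgroup:
  fixes G (structure)
  assumes G: "comm_group G" and S: "S \<subseteq> carrier G"
  shows "subgroup (span_top G S) G"
proof -
  interpret comm_group G by (rule G)
  interpret L: subgroup "generate G S" G by (rule generate_is_subgroup[OF S])
  have pow_closed: "a [^] (k::nat) \<in> generate G S" if "a \<in> generate G S" for a k
    using L.subgroup_axioms that by (metis int_pow_int subgroup_int_pow_closed)
  show ?thesis
  proof (rule subgroupI)
    show "span_top G S \<subseteq> carrier G" by (auto simp: span_top_def)
    show "span_top G S \<noteq> {}" using L.one_closed by (force simp: span_top_def)
  next
    fix a assume "a \<in> span_top G S"
    then obtain n :: nat where "n > 0" "a [^] n \<in> generate G S" "a \<in> carrier G"
      by (auto simp: span_top_def)
    then show "inv a \<in> span_top G S" by (auto simp: span_top_def nat_pow_inv)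
  next
    fix a b assume "a \<in> span_top G S" "b \<in> span_top G S"
    then obtain n m :: nat where n: "n > 0" "a [^] n \<in> generate G S" "a \<in> carrier G"
      and m: "m > 0" "b [^] m \<in> generate G S" "b \<in> carrier G"
      by (auto simp: span_top_def)
    have "(a \<otimes> b) [^] (n * m) = (a [^] n) [^] m \<otimes> (b [^] m) [^] n"
      using n m by (simp add: pow_mult_distrib m_comm nat_pow_pow mult.commute)
    then have "(a \<otimes> b) [^] (n * m) \<in> generate G S"
      using pow_closed n m by simp
    then show "a \<otimes> b \<in> span_top G S"
      using n m by (auto simp: span_top_def intro!: exI[of _ "n * m"])
  qed
qed

locale root_datum =
  fixes R :: "('x, 'y) root_datum"
  assumes is_root_datum: "is_root_datum R"
begin

lemma lat_comm_group: "comm_group (lat R)"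
  and colat_comm_group: "comm_group (colat R)"
  and perfect_pairing: "perfect_pairing (lat R) (colat R) (pairing R)"
  and finite_roots: "finite (roots R)"
  and roots_subset: "roots R \<subseteq> carrier (lat R)"
  and pairing_root_coroot: "\<alpha> \<in> roots R \<Longrightarrow> pairing R \<alpha> (coroot R \<alpha>) = 2"
  using is_root_datum by (simp_all add: is_root_datum_def free_lattice_def)

lemma coroots_subset: "coroots R \<subseteq> carrier (colat R)"
  using is_root_datum by (simp add: is_root_datum_def)

lemma coroot_closed: "\<alpha> \<in> roots R \<Longrightarrow> coroot R \<alpha> \<in> carrier (colat R)"
  using coroots_subset by (auto simp: coroots_def)

lemma root_closed: "\<alpha> \<in> roots R \<Longrightarrow> \<alpha> \<in> carrier (lat R)"
  using roots_subset by blast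

sublocale X: comm_group "lat R" by (rule lat_comm_group)
sublocale Y: comm_group "colat R" by (rule colat_comm_group)

lemma pairing_hom_left: "y \<in> carrier (colat R) \<Longrightarrow> (\<lambda>x. pairing R x y) \<in> hom (lat R) integer_group"
  using perfect_pairing by (auto simp: perfect_pairing_def hom_def)

lemma pairing_hom_right: "x \<in> carrier (lat R) \<Longrightarrow> pairing R x \<in> hom (colat R) integer_group"
  using perfect_pairing by (auto simp: perfect_pairing_def hom_def)

lemmas pairing_one_left = hom_integer_group_one[OF X.is_group pairing_hom_left]
lemmas pairing_mult_left = hom_integer_group_mult[OF X.is_group pairing_hom_left]
lemmas pairing_inv_left = hom_integer_group_inv[OF X.is_group pairing_hom_left]
lemmas pairing_int_pow_left = hom_integer_group_int_pow[OF X.is_group pairing_hom_left]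
lemmas pairing_nat_pow_left = hom_integer_group_nat_pow[OF X.is_group pairing_hom_left]
lemmas pairing_one_right = hom_integer_group_one[OF Y.is_group pairing_hom_right]
lemmas pairing_mult_right = hom_integer_group_mult[OF Y.is_group pairing_hom_right]
lemmas pairing_inv_right = hom_integer_group_inv[OF Y.is_group pairing_hom_right]

lemma pairing_nondegenerate:
  assumes "x \<in> carrier (lat R)" and "\<And>y. y \<in> carrier (colat R) \<Longrightarrow> pairing R x y = 0"
  shows "x = \<one>\<^bsub>lat R\<^esub>"
proof -
  have "(\<lambda>_. 0::int) \<in> hom (colat R) integer_group" by (simp add: hom_def)
  then have "\<exists>!x. x \<in> carrier (lat R) \<and> (\<forall>y\<in>carrier (colat R). pairing R x y = 0)"
    using perfect_pairing by (auto simp: perfect_pairing_def)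
  then show ?thesis
    using assms pairing_one_left by (metis X.one_closed)
qed

definition reflection :: "'x \<Rightarrow> 'x \<Rightarrow> 'x" where
  "reflection \<alpha> x = x \<otimes>\<^bsub>lat R\<^esub> \<alpha> [^]\<^bsub>lat R\<^esub> (- pairing R x (coroot R \<alpha>))"

lemma reflection_in_roots: "\<alpha> \<in> roots R \<Longrightarrow> \<beta> \<in> roots R \<Longrightarrow> reflection \<alpha> \<beta> \<in> roots R"
  using is_root_datum by (simp add: is_root_datum_def reflection_def)

lemma pairing_reflection:
  assumes "\<alpha> \<in> roots R" "x \<in> carrier (lat R)" "y \<in> carrier (colat R)"
  shows "pairing R (reflection \<alpha> x) y = pairing R x y - pairing R x (coroot R \<alpha>) * pairing R \<alpha> y"
  using assms by (simp add: reflection_def root_closed pairing_mult_left pairing_int_pow_left)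

lemma reflection_reflection:
  assumes \<alpha>: "\<alpha> \<in> roots R" and x: "x \<in> carrier (lat R)"
  shows "reflection \<alpha> (reflection \<alpha> x) = x"
proof -
  define k where "k = pairing R x (coroot R \<alpha>)"
  have "pairing R (reflection \<alpha> x) (coroot R \<alpha>) = - k"
    using pairing_reflection[OF \<alpha> x coroot_closed[OF \<alpha>]] pairing_root_coroot[OF \<alpha>] by (simp add: k_def)
  then have "reflection \<alpha> (reflection \<alpha> x) = x \<otimes>\<^bsub>lat R\<^esub> (\<alpha> [^]\<^bsub>lat R\<^esub> (- k) \<otimes>\<^bsub>lat R\<^esub> \<alpha> [^]\<^bsub>lat R\<^esub> k)"
    using \<alpha> x by (simp add: reflection_def k_def root_closed X.m_assoc)
  also have "\<dots> = x"
    using \<alpha> x by (simp add: X.int_pow_mult[symmetric] root_closed)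
  finally show ?thesis .
qed

lemma reflection_permutes_roots: "\<alpha> \<in> roots R \<Longrightarrow> bij_betw (reflection \<alpha>) (roots R) (roots R)"
  by (rule bij_betw_byWitness[where f' = "reflection \<alpha>"])
    (auto simp: reflection_reflection root_closed reflection_in_roots)

definition weyl_form :: "'y \<Rightarrow> 'y \<Rightarrow> int" where
  "weyl_form u v = (\<Sum>\<gamma>\<in>roots R. pairing R \<gamma> u * pairing R \<gamma> v)"

lemma weyl_form_hom_left: "(\<lambda>u. weyl_form u v) \<in> hom (colat R) integer_group"
  by (rule homI) (auto simp: weyl_form_def pairing_mult_right root_closed distrib_right sum.distrib)

lemmas weyl_form_one_left = hom_integer_group_one[OF Y.is_group weyl_form_hom_left]
lemmas weyl_form_mult_left = hom_integer_group_mult[OF Y.is_group weyl_form_hom_left]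
lemmas weyl_form_int_pow_left = hom_integer_group_int_pow[OF Y.is_group weyl_form_hom_left]

lemma weyl_form_coroot:
  assumes \<alpha>: "\<alpha> \<in> roots R" and v: "v \<in> carrier (colat R)"
  shows "2 * weyl_form (coroot R \<alpha>) v = weyl_form (coroot R \<alpha>) (coroot R \<alpha>) * pairing R \<alpha> v"
proof -
  let ?k = "\<lambda>\<gamma>. pairing R \<gamma> (coroot R \<alpha>)"
  have "weyl_form (coroot R \<alpha>) v
      = (\<Sum>\<gamma>\<in>roots R. pairing R (reflection \<alpha> \<gamma>) (coroot R \<alpha>) * pairing R (reflection \<alpha> \<gamma>) v)"
    unfolding weyl_form_def by (rule sum.reindex_bij_betw[OF reflection_permutes_roots[OF \<alpha>], symmetric])
  also have "\<dots> = (\<Sum>\<gamma>\<in>roots R. ?k \<gamma> * ?k \<gamma> * pairing R \<alpha> v - ?k \<gamma> * pairing R \<gamma> v)"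
    using \<alpha> v by (intro sum.cong)
      (simp_all add: pairing_reflection coroot_closed root_closed pairing_root_coroot algebra_simps)
  also have "\<dots> = weyl_form (coroot R \<alpha>) (coroot R \<alpha>) * pairing R \<alpha> v - weyl_form (coroot R \<alpha>) v"
    by (simp add: weyl_form_def sum_subtractf sum_distrib_right)
  finally show ?thesis by simp
qed

lemma weyl_form_coroot_pos: "\<alpha> \<in> roots R \<Longrightarrow> weyl_form (coroot R \<alpha>) (coroot R \<alpha>) > 0"
  using member_le_sum[of \<alpha> "roots R" "\<lambda>\<gamma>. pairing R \<gamma> (coroot R \<alpha>) * pairing R \<gamma> (coroot R \<alpha>)"]
  by (simp add: weyl_form_def pairing_root_coroot finite_roots)

lemma weyl_form_self_eq_0:
  assumes "weyl_form w w = 0" and "\<gamma> \<in> roots R"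
  shows "pairing R \<gamma> w = 0"
  using assms finite_roots by (simp add: weyl_form_def sum_nonneg_eq_0_iff)

lemma coroot_lattice_subgroup: "subgroup (generate (colat R) (coroots R)) (colat R)"
  by (rule Y.generate_is_subgroup[OF coroots_subset])

lemma root_lattice_subset: "generate (lat R) (roots R) \<subseteq> carrier (lat R)"
  by (rule X.generate_incl[OF roots_subset])

lemma coroot_lattice_subset: "generate (colat R) (coroots R) \<subseteq> carrier (colat R)"
  by (rule Y.generate_incl[OF coroots_subset])

lemma coroot_lattice_int_pow:
  "\<alpha> \<in> roots R \<Longrightarrow> coroot R \<alpha> [^]\<^bsub>colat R\<^esub> (k::int) \<in> generate (colat R) (coroots R)"
  by (rule Y.subgroup_int_pow_closed[OF coroot_lattice_subgroup]) (simp add: generate.incl coroots_def)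

lemma root_lattice_weyl_form:
  "z \<in> generate (lat R) (roots R) \<Longrightarrow>
   \<exists>M>0. \<exists>w\<in>generate (colat R) (coroots R). \<forall>v\<in>carrier (colat R). M * pairing R z v = weyl_form w v"
proof (induction rule: generate.induct)
  case one
  show ?case
    by (intro exI[of _ 1] conjI bexI[of _ "\<one>\<^bsub>colat R\<^esub>"])
      (auto simp: generate.one pairing_one_left weyl_form_one_left)
next
  case (incl \<alpha>)
  show ?case
  proof (intro exI[of _ "weyl_form (coroot R \<alpha>) (coroot R \<alpha>)"] conjI
      bexI[of _ "coroot R \<alpha> [^]\<^bsub>colat R\<^esub> (2::int)"] ballI)
    fix v assume "v \<in> carrier (colat R)"
    then show "weyl_form (coroot R \<alpha>) (coroot R \<alpha>) * pairing R \<alpha> v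
        = weyl_form (coroot R \<alpha> [^]\<^bsub>colat R\<^esub> (2::int)) v"
      using incl weyl_form_coroot by (simp add: weyl_form_int_pow_left coroot_closed)
  qed (use incl in \<open>simp_all add: weyl_form_coroot_pos coroot_lattice_int_pow\<close>)
next
  case (inv \<alpha>)
  show ?case
  proof (intro exI[of _ "weyl_form (coroot R \<alpha>) (coroot R \<alpha>)"] conjI
      bexI[of _ "coroot R \<alpha> [^]\<^bsub>colat R\<^esub> (-2::int)"] ballI)
    fix v assume "v \<in> carrier (colat R)"
    then show "weyl_form (coroot R \<alpha>) (coroot R \<alpha>) * pairing R (inv\<^bsub>lat R\<^esub> \<alpha>) v
        = weyl_form (coroot R \<alpha> [^]\<^bsub>colat R\<^esub> (-2::int)) v"
      using inv weyl_form_coroot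
      by (simp add: weyl_form_int_pow_left coroot_closed pairing_inv_left root_closed)
  qed (use inv in \<open>simp_all add: weyl_form_coroot_pos coroot_lattice_int_pow\<close>)
next
  case (eng z1 z2)
  then obtain M1 w1 M2 w2 where M: "M1 > 0" "M2 > 0"
    and w: "w1 \<in> generate (colat R) (coroots R)" "w2 \<in> generate (colat R) (coroots R)"
    and e: "\<And>v. v \<in> carrier (colat R) \<Longrightarrow> M1 * pairing R z1 v = weyl_form w1 v"
           "\<And>v. v \<in> carrier (colat R) \<Longrightarrow> M2 * pairing R z2 v = weyl_form w2 v"
    by blast
  interpret W: subgroup "generate (colat R) (coroots R)" "colat R" by (rule coroot_lattice_subgroup)
  have wc: "w1 \<in> carrier (colat R)" "w2 \<in> carrier (colat R)" using w by auto
  have zc: "z1 \<in> carrier (lat R)" "z2 \<in> carrier (lat R)" using eng.hyps root_lattice_subset by auto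
  show ?case
  proof (intro exI[of _ "M1 * M2"] conjI bexI[of _ "w1 [^]\<^bsub>colat R\<^esub> M2 \<otimes>\<^bsub>colat R\<^esub> w2 [^]\<^bsub>colat R\<^esub> M1"] ballI)
    show "w1 [^]\<^bsub>colat R\<^esub> M2 \<otimes>\<^bsub>colat R\<^esub> w2 [^]\<^bsub>colat R\<^esub> M1 \<in> generate (colat R) (coroots R)"
      using w by (simp add: Y.subgroup_int_pow_closed[OF coroot_lattice_subgroup])
    fix v assume v: "v \<in> carrier (colat R)"
    show "M1 * M2 * pairing R (z1 \<otimes>\<^bsub>lat R\<^esub> z2) v
        = weyl_form (w1 [^]\<^bsub>colat R\<^esub> M2 \<otimes>\<^bsub>colat R\<^esub> w2 [^]\<^bsub>colat R\<^esub> M1) v"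
      using e[OF v] zc wc v
      by (simp add: pairing_mult_left weyl_form_mult_left weyl_form_int_pow_left algebra_simps)
  qed (use M in simp)
qed

lemma orthogonal_coroot_lattice:
  assumes z: "z \<in> carrier (lat R)" and orth: "\<And>\<alpha>. \<alpha> \<in> roots R \<Longrightarrow> pairing R z (coroot R \<alpha>) = 0"
  shows "w \<in> generate (colat R) (coroots R) \<Longrightarrow> pairing R z w = 0"
proof (induction rule: generate.induct)
  case one
  show ?case using z by (rule pairing_one_right)
next
  case (incl w)
  then show ?case using orth by (auto simp: coroots_def)
next
  case (inv w)
  then show ?case using z orth by (auto simp: coroots_def pairing_inv_right coroot_closed)
next
  case (eng w1 w2)
  then show ?case using z coroot_lattice_subset by (simp add: pairing_mult_right subset_iff)
qed

lemma span_top_orthogonal_coroots_eq_one: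
  assumes x: "x \<in> span_top (lat R) (roots R)"
    and orth: "\<And>\<alpha>. \<alpha> \<in> roots R \<Longrightarrow> pairing R x (coroot R \<alpha>) = 0"
  shows "x = \<one>\<^bsub>lat R\<^esub>"
proof -
  obtain n :: nat where n: "n > 0" and xn: "x [^]\<^bsub>lat R\<^esub> n \<in> generate (lat R) (roots R)"
    and xc: "x \<in> carrier (lat R)"
    using x by (auto simp: span_top_def)
  obtain M w where M: "M > 0" and w: "w \<in> generate (colat R) (coroots R)"
    and Mw: "\<And>v. v \<in> carrier (colat R) \<Longrightarrow> M * pairing R (x [^]\<^bsub>lat R\<^esub> n) v = weyl_form w v"
    using root_lattice_weyl_form[OF xn] by blast
  have wc: "w \<in> carrier (colat R)" using w coroot_lattice_subset by blast
  have "pairing R (x [^]\<^bsub>lat R\<^esub> n) w = 0"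
    using orthogonal_coroot_lattice[OF _ _ w] xc orth by (simp add: pairing_nat_pow_left coroot_closed)
  then have "weyl_form w w = 0" using Mw[OF wc] by simp
  then have "weyl_form w v = 0" for v
    using weyl_form_self_eq_0 by (simp add: weyl_form_def[of w v])
  then have "M * (int n * pairing R x v) = 0" if "v \<in> carrier (colat R)" for v
    using Mw[OF that] xc that by (simp add: pairing_nat_pow_left)
  then have "pairing R x v = 0" if "v \<in> carrier (colat R)" for v
    using that M n by simp
  then show ?thesis by (rule pairing_nondegenerate[OF xc])
qed

end

lemma transpose_pairing:
  assumes R': "root_datum R'" and R: "root_datum R"
    and f: "f \<in> hom (lat R') (lat R)" and y: "y \<in> carrier (colat R)"
    and x: "x \<in> carrier (lat R')"
  shows "pairing R' x (transpose R' R f y) = pairing R (f x) y"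
proof -
  have "(\<lambda>x. pairing R (f x) y) \<in> hom (lat R') integer_group"
    using hom_compose[OF f root_datum.pairing_hom_left[OF R y]] by (simp add: comp_def)
  then have "\<exists>!y'. y' \<in> carrier (colat R') \<and> (\<forall>x\<in>carrier (lat R'). pairing R' x y' = pairing R (f x) y)"
    using root_datum.perfect_pairing[OF R'] by (simp add: perfect_pairing_def)
  then have "transpose R' R f y \<in> carrier (colat R') \<and>
      (\<forall>x\<in>carrier (lat R'). pairing R' x (transpose R' R f y) = pairing R (f x) y)"
    unfolding transpose_def by (rule theI')
  then show ?thesis using x by simp
qed

lemma transpose_cong:
  assumes "\<And>x. x \<in> carrier (lat R') \<Longrightarrow> pairing S (g x) z = pairing R (f x) y"
  shows "transpose R' S g z = transpose R' R f y"
  unfolding transpose_def using assms by simp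

lemma lat_central_prod:
  "lat (central_prod R R' A h h') = (lat R \<times>\<times> lat R')
     \<lparr>carrier := {(x, x'). x \<in> carrier (lat R) \<and> x' \<in> carrier (lat R') \<and> h x = h' x'}\<rparr>"
  by (simp add: central_prod_def induced_def dsum_def)

lemma roots_central_prod:
  "roots (central_prod R R' A h h') =
     (\<lambda>a. (a, \<one>\<^bsub>lat R'\<^esub>)) ` roots R \<union> (\<lambda>a. (\<one>\<^bsub>lat R\<^esub>, a)) ` roots R'"
  by (simp add: central_prod_def induced_def dsum_def)

lemma pairing_central_prod: "pairing (central_prod R R' A h h') b \<psi> = \<psi> b"
  by (simp add: central_prod_def induced_def)

lemma coroot_central_prod_left:
  assumes "a \<in> roots R" and "b \<in> carrier (lat (central_prod R R' A h h'))"
  shows "coroot (central_prod R R' A h h') (a, \<one>\<^bsub>lat R'\<^esub>) b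
           = pairing R (fst b) (coroot R a) + pairing R' (snd b) \<one>\<^bsub>colat R'\<^esub>"
  using assms by (auto simp: central_prod_def induced_def dsum_def split: prod.splits)

lemma rad_simps:
  "lat (rad R) = lat R Mod span_top (lat R) (roots R)"
  "roots (rad R) = {}"
  "pairing (rad R) C y = pairing R (SOME x. x \<in> C) y"
  "\<one>\<^bsub>colat (rad R)\<^esub> = \<one>\<^bsub>colat R\<^esub>"
  by (simp_all add: rad_def)

locale root_datum_hom = source: root_datum R2 + target: root_datum R1
  for R2 :: "('b, 'd) root_datum" and R1 :: "('a, 'c) root_datum" +
  fixes f :: "'b \<Rightarrow> 'a" and \<tau> :: "'a \<Rightarrow> 'b"
  assumes root_hom: "root_hom R2 R1 f \<tau>"
begin

lemma f_hom: "f \<in> hom (lat R2) (lat R1)"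
  and \<tau>_bij: "bij_betw \<tau> (roots R1) (roots R2)"
  and f_\<tau>: "a \<in> roots R1 \<Longrightarrow> f (\<tau> a) = a"
  and transpose_coroot: "a \<in> roots R1 \<Longrightarrow> transpose R2 R1 f (coroot R1 a) = coroot R2 (\<tau> a)"
  using root_hom by (simp_all add: root_hom_def)

sublocale f: group_hom "lat R2" "lat R1" f
  by (simp add: group_hom_def group_hom_axioms_def f_hom source.X.is_group target.X.is_group)

lemma pairing_coroot_\<tau>:
  "x \<in> carrier (lat R2) \<Longrightarrow> a \<in> roots R1 \<Longrightarrow> pairing R2 x (coroot R2 (\<tau> a)) = pairing R1 (f x) (coroot R1 a)"
  using transpose_pairing[OF source.root_datum_axioms target.root_datum_axioms f_hom target.coroot_closed]
  by (simp add: transpose_coroot)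

lemma span_top_kernel_trivial:
  assumes t: "t \<in> span_top (lat R2) (roots R2)" and ft: "f t = \<one>\<^bsub>lat R1\<^esub>"
  shows "t = \<one>\<^bsub>lat R2\<^esub>"
proof (rule source.span_top_orthogonal_coroots_eq_one[OF t])
  fix \<beta> assume "\<beta> \<in> roots R2"
  then obtain a where a: "a \<in> roots R1" and \<beta>: "\<beta> = \<tau> a"
    using \<tau>_bij by (auto simp: bij_betw_def)
  have "t \<in> carrier (lat R2)" using t by (simp add: span_top_def)
  then show "pairing R2 t (coroot R2 \<beta>) = 0"
    using a \<beta> ft by (simp add: pairing_coroot_\<tau> target.pairing_one_left target.coroot_closed)
qed

lemma central_prod_rad_iso:
  defines "T \<equiv> span_top (lat R2) (roots R2)"
  shows "root_iso R2
           (central_prod R1 (rad R2) (lat R1 Mod f ` T) (\<lambda>x. f ` T #>\<^bsub>lat R1\<^esub> x)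
              (\<lambda>C. f ` T #>\<^bsub>lat R1\<^esub> f (SOME x. x \<in> C)))
           (\<lambda>x. (f x, T #>\<^bsub>lat R2\<^esub> x)) (\<lambda>(a, C). \<tau> a)"
    (is "root_iso R2 ?CP ?\<phi> ?\<sigma>")
proof -
  have T: "subgroup T (lat R2)"
    unfolding T_def by (rule span_top_subgroup[OF source.lat_comm_group source.roots_subset])
  have roots_T: "roots R2 \<subseteq> T"
    using source.roots_subset by (auto simp: T_def span_top_def intro!: exI[of _ 1] generate.incl)
  have lat_CP: "lat ?CP = (lat R1 \<times>\<times> (lat R2 Mod T))\<lparr>carrier :=
      {(a, C). a \<in> carrier (lat R1) \<and> C \<in> carrier (lat R2 Mod T) \<and>
               f ` T #>\<^bsub>lat R1\<^esub> a = f ` T #>\<^bsub>lat R1\<^esub> f (SOME x. x \<in> C)}\<rparr>"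
    by (simp add: lat_central_prod rad_simps T_def)
  have bij: "bij_betw ?\<phi> (carrier (lat R2)) (carrier (lat ?CP))"
    unfolding lat_CP using f.paired_rcos_bij[OF T span_top_kernel_trivial] by (simp add: T_def)
  have "?\<phi> \<in> hom (lat R2) (lat R1 \<times>\<times> (lat R2 Mod T))"
    using f_hom normal.r_coset_hom_Mod[OF source.X.subgroup_imp_normal[OF T]] by (simp add: hom_paired)
  then have hom: "?\<phi> \<in> hom (lat R2) (lat ?CP)"
    using bij unfolding lat_CP bij_betw_def by (intro hom_restrict_codomain) simp_all
  have roots_CP: "roots ?CP = (\<lambda>a. (a, T)) ` roots R1"
    by (simp add: roots_central_prod rad_simps FactGroup_def T_def)
  have \<sigma>_bij: "bij_betw ?\<sigma> (roots ?CP) (roots R2)"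
    using \<tau>_bij unfolding roots_CP bij_betw_def inj_on_def by (auto simp: image_image)
  have \<phi>_\<tau>: "?\<phi> (\<tau> a) = (a, T)" if "a \<in> roots R1" for a
  proof -
    have "\<tau> a \<in> roots R2" using that \<tau>_bij by (auto simp: bij_betw_def)
    then show ?thesis
      using that roots_T source.X.coset_join2[OF _ T] source.root_closed by (auto simp: f_\<tau>)
  qed
  have transpose_CP: "transpose R2 ?CP ?\<phi> (coroot ?CP (a, T)) = coroot R2 (\<tau> a)" if "a \<in> roots R1" for a
  proof -
    have one_rad: "\<one>\<^bsub>lat (rad R2)\<^esub> = T" by (simp add: rad_simps FactGroup_def T_def)
    have "pairing ?CP (?\<phi> x) (coroot ?CP (a, T)) = pairing R1 (f x) (coroot R1 a)"
      if x: "x \<in> carrier (lat R2)" for x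
    proof -
      have "?\<phi> x \<in> carrier (lat ?CP)" using bij_betwE[OF bij] x by blast
      from coroot_central_prod_left[OF \<open>a \<in> roots R1\<close> this, unfolded one_rad]
      show ?thesis
        using source.X.rcos_SOME_closed[OF T x]
        by (simp add: pairing_central_prod rad_simps source.pairing_one_right)
    qed
    then show ?thesis
      using transpose_coroot[OF that] transpose_cong[where R' = R2 and S = ?CP and g = ?\<phi> and R = R1 and f = f]
      by simp
  qed
  show ?thesis
    unfolding root_iso_def root_hom_def
  proof (intro conjI ballI hom bij \<sigma>_bij)
    fix \<alpha> assume "\<alpha> \<in> roots ?CP"
    then obtain a where "a \<in> roots R1" and "\<alpha> = (a, T)" unfolding roots_CP by blast
    then show "?\<phi> (?\<sigma> \<alpha>) = \<alpha>" and "transpose R2 ?CP ?\<phi> (coroot ?CP \<alpha>) = coroot R2 (?\<sigma> \<alpha>)"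
      by (simp_all add: \<phi>_\<tau> transpose_CP)
  qed
qed

end

theorem mainTheorem6:
  fixes R1 :: "('a, 'c) root_datum" and R2 :: "('b, 'd) root_datum"
    and f :: "'b \<Rightarrow> 'a" and \<tau> :: "'a \<Rightarrow> 'b"
  assumes "is_reduced_root_datum R1" and "is_reduced_root_datum R2"
    and "root_hom R2 R1 f \<tau>"
    and "f ` carrier (lat R2) = carrier (lat R1)"
  shows "let T = span_top (lat R2) (roots R2);
             A = lat R1 Mod (f ` T);
             h1 = (\<lambda>x. (f ` T) #>\<^bsub>lat R1\<^esub> x);
             h2 = (\<lambda>C. (f ` T) #>\<^bsub>lat R1\<^esub> f (SOME x. x \<in> C));
             \<phi> = (\<lambda>x. (f x, T #>\<^bsub>lat R2\<^esub> x))
         in (\<exists>\<sigma>. root_iso R2 (central_prod R1 (rad R2) A h1 h2) \<phi> \<sigma>) \<and>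
            (\<forall>x\<in>carrier (lat R2). fst (\<phi> x) = f x)"
proof -
  interpret root_datum_hom R2 R1 f \<tau>
    using assms(1-3) by (simp add: root_datum_hom_def root_datum_def root_datum_hom_axioms_def
      is_reduced_root_datum_def)
  show ?thesis
    unfolding Let_def using central_prod_rad_iso by auto
qed

end
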